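(* Let $\Psi$ be a well-formed declarative context and suppose $\Psi\vdash e\Rightarrow A$. Then: (i) if $\Psi,x:A\vdash e'\Leftarrow C$ then $\Psi\vdash[e/x]e'\Leftarrow C$; (ii) if $\Psi,x:A\vdash e'\Rightarrow C$ then $\Psi\vdash[e/x]e'\Rightarrow C$; (iii) if $\Psi,x:A\vdash e'\bullet B\Rightarrow\!\!\Rightarrow C$ then $\Psi\vdash[e/x]e'\bullet B\Rightarrow\!\!\Rightarrow C$.
   Context: Types $A,B,C ::= 1\mid\alpha\mid\forall\alpha.A\mid A\to B$; monotypes $\sigma,\tau ::= 1\mid\alpha\mid\sigma\to\tau$; declarative contexts $\Psi ::= \cdot\mid\Psi,\alpha\mid\Psi,x:A$. Well-formedness $\Psi\vdash A$: all type variables of $A$ are bound or declared in $\Psi$. Declarative subtyping $\Psi\vdash A\le B$: least relation with $\alpha\in\Psi\Rightarrow\Psi\vdash\alpha\le\alpha$; $\Psi\vdash1\le1$; ($\Psi\vdash B_1\le A_1$, $\Psi\vdash A_2\le B_2$) $\Rightarrow\Psi\vdash A_1\to A_2\le B_1\to B_2$; ($\Psi\vdash\tau$ monotype, $\Psi\vdash[\tau/\alpha]A\le B$) $\Rightarrow\Psi\vdash\forall\alpha.A\le B$; $\Psi,\beta\vdash A\le B\Rightarrow\Psi\vdash A\le\forall\beta.B$. Terms $e ::= x\mid()\mid\lambda x.e\mid e_1\,e_2\mid(e:A)$; $[e/x]e'$ is capture-avoiding substitution of terms. Declarative bidirectional judgments (checking $\Leftarrow$, synthesis $\Rightarrow$,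 application $e\bullet A\Rightarrow\!\!\Rightarrow C$) are defined mutually by: $(x:A)\in\Psi\Rightarrow\Psi\vdash x\Rightarrow A$; ($\Psi\vdash e\Rightarrow A$, $\Psi\vdash A\le B$) $\Rightarrow\Psi\vdash e\Leftarrow B$; ($\Psi\vdash A$, $\Psi\vdash e\Leftarrow A$) $\Rightarrow\Psi\vdash(e:A)\Rightarrow A$; $\Psi\vdash()\Leftarrow1$; $\Psi\vdash()\Rightarrow1$; $\Psi,\alpha\vdash e\Leftarrow A\Rightarrow\Psi\vdash e\Leftarrow\forall\alpha.A$; ($\Psi\vdash\tau$ monotype, $\Psi\vdash e\bullet[\tau/\alpha]A\Rightarrow\!\!\Rightarrow C$) $\Rightarrow\Psi\vdash e\bullet\forall\alpha.A\Rightarrow\!\!\Rightarrow C$; $\Psi,x:A\vdash e\Leftarrow B\Rightarrow\Psi\vdash\lambda x.e\Leftarrow A\to B$; ($\Psi\vdash\sigma\to\tau$ monotypes, $\Psi,x:\sigma\vdash e\Leftarrow\tau$) $\Rightarrow\Psi\vdash\lambda x.e\Rightarrow\sigma\to\tau$; ($\Psi\vdash e_1\Rightarrow A$, $\Psi\vdash e_2\bullet A\Rightarrow\!\!\Rightarrow C$) $\Rightarrow\Psi\vdash e_1\,e_2\Rightarrow C$; $\Psi\vdash e\Leftarrow A\Rightarrow\Psi\vdash e\bullet A\to C\Rightarrow\!\!\Rightarrow C$. *)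

theory Defs
  imports Main
begin

text \<open>Locally nameless representation: free type/term variables are names (nat),
bound variables are de Bruijn indices.  Capture-avoiding substitution is then
plain replacement of free names.\<close>

type_synonym tvname = nat
type_synonym vname = nat

datatype ty =
    TUnit
  | TFree tvname
  | TBound nat
  | TAll ty
  | TArr ty ty

datatype tm =
    Free vname
  | BVar nat
  | Unit
  | Lam tm
  | App tm tm
  | Anno tm ty

datatype ctx_entry = CTVar tvname | CVar vname ty

type_synonym ctx = "ctx_entry list"

fun tvars :: "ctx \<Rightarrow> tvname set" where
  "tvars [] = {}"
| "tvars (CTVar a # G) = insert a (tvars G)"
| "tvars (CVar x A # G) = tvars G"

fun vars :: "ctx \<Rightarrow> vname set" where
  "vars [] = {}"
| "vars (CTVar a # G) = vars G"
| "vars (CVar x A # G) = insert x (vars G)"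

fun ftv_ty :: "ty \<Rightarrow> tvname set" where
  "ftv_ty TUnit = {}"
| "ftv_ty (TFree a) = {a}"
| "ftv_ty (TBound n) = {}"
| "ftv_ty (TAll A) = ftv_ty A"
| "ftv_ty (TArr A B) = ftv_ty A \<union> ftv_ty B"

fun ftv_tm :: "tm \<Rightarrow> tvname set" where
  "ftv_tm (Free x) = {}"
| "ftv_tm (BVar n) = {}"
| "ftv_tm Unit = {}"
| "ftv_tm (Lam e) = ftv_tm e"
| "ftv_tm (App e1 e2) = ftv_tm e1 \<union> ftv_tm e2"
| "ftv_tm (Anno e A) = ftv_tm e \<union> ftv_ty A"

fun fv_tm :: "tm \<Rightarrow> vname set" where
  "fv_tm (Free x) = {x}"
| "fv_tm (BVar n) = {}"
| "fv_tm Unit = {}"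
| "fv_tm (Lam e) = fv_tm e"
| "fv_tm (App e1 e2) = fv_tm e1 \<union> fv_tm e2"
| "fv_tm (Anno e A) = fv_tm e"

fun ty_closed_at :: "nat \<Rightarrow> ty \<Rightarrow> bool" where
  "ty_closed_at k TUnit = True"
| "ty_closed_at k (TFree a) = True"
| "ty_closed_at k (TBound n) = (n < k)"
| "ty_closed_at k (TAll A) = ty_closed_at (Suc k) A"
| "ty_closed_at k (TArr A B) = (ty_closed_at k A \<and> ty_closed_at k B)"

definition wf_ty :: "ctx \<Rightarrow> ty \<Rightarrow> bool" where
  "wf_ty G A \<longleftrightarrow> ty_closed_at 0 A \<and> ftv_ty A \<subseteq> tvars G"

fun mono :: "ty \<Rightarrow> bool" where
  "mono TUnit = True"
| "mono (TFree a) = True"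
| "mono (TBound n) = True"
| "mono (TAll A) = False"
| "mono (TArr A B) = (mono A \<and> mono B)"

definition wf_mono :: "ctx \<Rightarrow> ty \<Rightarrow> bool" where
  "wf_mono G t \<longleftrightarrow> wf_ty G t \<and> mono t"

text \<open>Opening: replace bound type index k by U (this realises [U/\<alpha>]A for \<forall>\<alpha>.A).\<close>
fun open_ty :: "nat \<Rightarrow> ty \<Rightarrow> ty \<Rightarrow> ty" where
  "open_ty k U TUnit = TUnit"
| "open_ty k U (TFree a) = TFree a"
| "open_ty k U (TBound n) = (if n = k then U else TBound n)"
| "open_ty k U (TAll A) = TAll (open_ty (Suc k) U A)"
| "open_ty k U (TArr A B) = TArr (open_ty k U A) (open_ty k U B)"

fun open_tm :: "nat \<Rightarrow> tm \<Rightarrow> tm \<Rightarrow> tm" where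
  "open_tm k u (Free x) = Free x"
| "open_tm k u (BVar n) = (if n = k then u else BVar n)"
| "open_tm k u Unit = Unit"
| "open_tm k u (Lam e) = Lam (open_tm (Suc k) u e)"
| "open_tm k u (App e1 e2) = App (open_tm k u e1) (open_tm k u e2)"
| "open_tm k u (Anno e A) = Anno (open_tm k u e) A"

fun subst_tm :: "vname \<Rightarrow> tm \<Rightarrow> tm \<Rightarrow> tm" where
  "subst_tm x u (Free y) = (if y = x then u else Free y)"
| "subst_tm x u (BVar n) = BVar n"
| "subst_tm x u Unit = Unit"
| "subst_tm x u (Lam e) = Lam (subst_tm x u e)"
| "subst_tm x u (App e1 e2) = App (subst_tm x u e1) (subst_tm x u e2)"
| "subst_tm x u (Anno e A) = Anno (subst_tm x u e) A"

inductive wf_ctx :: "ctx \<Rightarrow> bool" where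
  wf_nil: "wf_ctx []"
| wf_tvar: "wf_ctx G \<Longrightarrow> a \<notin> tvars G \<Longrightarrow> wf_ctx (G @ [CTVar a])"
| wf_var: "wf_ctx G \<Longrightarrow> x \<notin> vars G \<Longrightarrow> wf_ty G A \<Longrightarrow> wf_ctx (G @ [CVar x A])"

inductive sub :: "ctx \<Rightarrow> ty \<Rightarrow> ty \<Rightarrow> bool" where
  sub_var: "a \<in> tvars G \<Longrightarrow> sub G (TFree a) (TFree a)"
| sub_unit: "sub G TUnit TUnit"
| sub_arr: "sub G B1 A1 \<Longrightarrow> sub G A2 B2 \<Longrightarrow> sub G (TArr A1 A2) (TArr B1 B2)"
| sub_allL: "wf_mono G t \<Longrightarrow> sub G (open_ty 0 t A) B \<Longrightarrow> sub G (TAll A) B"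
| sub_allR: "b \<notin> tvars G \<Longrightarrow> b \<notin> ftv_ty A \<Longrightarrow> b \<notin> ftv_ty B \<Longrightarrow>
    sub (G @ [CTVar b]) A (open_ty 0 (TFree b) B) \<Longrightarrow> sub G A (TAll B)"

text \<open>Declarative bidirectional typing: chk = checking, syn = synthesis,
app = application judgment \<open>e \<bullet> A \<Rightarrow>\<Rightarrow> C\<close>.\<close>
inductive chk :: "ctx \<Rightarrow> tm \<Rightarrow> ty \<Rightarrow> bool"
  and syn :: "ctx \<Rightarrow> tm \<Rightarrow> ty \<Rightarrow> bool"
  and app :: "ctx \<Rightarrow> tm \<Rightarrow> ty \<Rightarrow> ty \<Rightarrow> bool" where
  syn_var: "CVar x A \<in> set G \<Longrightarrow> syn G (Free x) A"
| chk_sub: "syn G e A \<Longrightarrow> sub G A B \<Longrightarrow> chk G e B"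
| syn_anno: "wf_ty G A \<Longrightarrow> chk G e A \<Longrightarrow> syn G (Anno e A) A"
| chk_unit: "chk G Unit TUnit"
| syn_unit: "syn G Unit TUnit"
| chk_all: "a \<notin> tvars G \<Longrightarrow> a \<notin> ftv_ty A \<Longrightarrow> a \<notin> ftv_tm e \<Longrightarrow>
    chk (G @ [CTVar a]) e (open_ty 0 (TFree a) A) \<Longrightarrow> chk G e (TAll A)"
| app_all: "wf_mono G t \<Longrightarrow> app G e (open_ty 0 t A) C \<Longrightarrow> app G e (TAll A) C"
| chk_lam: "x \<notin> vars G \<Longrightarrow> x \<notin> fv_tm e \<Longrightarrow>
    chk (G @ [CVar x A]) (open_tm 0 (Free x) e) B \<Longrightarrow> chk G (Lam e) (TArr A B)"
| syn_lam: "wf_mono G (TArr s t) \<Longrightarrow> x \<notin> vars G \<Longrightarrow> x \<notin> fv_tm e \<Longrightarrow>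
    chk (G @ [CVar x s]) (open_tm 0 (Free x) e) t \<Longrightarrow> syn G (Lam e) (TArr s t)"
| syn_app: "syn G e1 A \<Longrightarrow> app G e2 A C \<Longrightarrow> syn G (App e1 e2) C"
| app_arr: "chk G e A \<Longrightarrow> app G e (TArr A C) C"

end

theory Submission
  imports Defs
begin

text \<open>Substitution is proved by induction on the typing derivation of the body, with the
context generalised to \<open>\<Psi>, x : A, \<Delta>\<close>; at the variable \<open>x\<close> itself one needs the
synthesis \<open>\<Psi> \<turnstile> e \<Rightarrow> A\<close> weakened to \<open>\<Psi>, \<Delta>\<close>. Weakening is the delicate part, since the
names bound by the derivation of \<open>e\<close> may clash with \<open>\<Delta>\<close>. It is obtained together with
arbitrary (not necessarily injective) renamings of type and term names: at a binder the
bound name is sent to a fresh one by updating the renaming, which only needs the bound name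
not to occur in the types of the context.\<close>

fun rename_ty :: "(tvname \<Rightarrow> tvname) \<Rightarrow> ty \<Rightarrow> ty" where
  "rename_ty f TUnit = TUnit"
| "rename_ty f (TFree a) = TFree (f a)"
| "rename_ty f (TBound n) = TBound n"
| "rename_ty f (TAll A) = TAll (rename_ty f A)"
| "rename_ty f (TArr A B) = TArr (rename_ty f A) (rename_ty f B)"

fun rename_tm :: "(tvname \<Rightarrow> tvname) \<Rightarrow> (vname \<Rightarrow> vname) \<Rightarrow> tm \<Rightarrow> tm" where
  "rename_tm f g (Free x) = Free (g x)"
| "rename_tm f g (BVar n) = BVar n"
| "rename_tm f g Unit = Unit"
| "rename_tm f g (Lam e) = Lam (rename_tm f g e)"
| "rename_tm f g (App e1 e2) = App (rename_tm f g e1) (rename_tm f g e2)"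
| "rename_tm f g (Anno e A) = Anno (rename_tm f g e) (rename_ty f A)"

fun rename_entry :: "(tvname \<Rightarrow> tvname) \<Rightarrow> (vname \<Rightarrow> vname) \<Rightarrow> ctx_entry \<Rightarrow> ctx_entry" where
  "rename_entry f g (CTVar a) = CTVar (f a)"
| "rename_entry f g (CVar x A) = CVar (g x) (rename_ty f A)"

fun tm_closed_at :: "nat \<Rightarrow> tm \<Rightarrow> bool" where
  "tm_closed_at k (Free x) = True"
| "tm_closed_at k (BVar n) = (n < k)"
| "tm_closed_at k Unit = True"
| "tm_closed_at k (Lam e) = tm_closed_at (Suc k) e"
| "tm_closed_at k (App e1 e2) = (tm_closed_at k e1 \<and> tm_closed_at k e2)"
| "tm_closed_at k (Anno e A) = tm_closed_at k e"

definition ctx_scoped :: "ctx \<Rightarrow> bool" where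
  "ctx_scoped G \<longleftrightarrow> (\<forall>x A. CVar x A \<in> set G \<longrightarrow> ftv_ty A \<subseteq> tvars G)"

lemma mem_tvars_iff: "a \<in> tvars G \<longleftrightarrow> CTVar a \<in> set G"
  by (induction G rule: tvars.induct) auto

lemma mem_vars_iff: "x \<in> vars G \<longleftrightarrow> (\<exists>A. CVar x A \<in> set G)"
  by (induction G rule: vars.induct) auto

lemma tvars_append [simp]: "tvars (G @ H) = tvars G \<union> tvars H"
  by (induction G rule: tvars.induct) auto

lemma vars_append [simp]: "vars (G @ H) = vars G \<union> vars H"
  by (induction G rule: vars.induct) auto

lemma finite_tvars [simp]: "finite (tvars G)"
  by (induction G rule: tvars.induct) auto

lemma finite_vars [simp]: "finite (vars G)"
  by (induction G rule: vars.induct) auto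

lemma finite_ftv_ty [simp]: "finite (ftv_ty A)"
  by (induction A) auto

lemma finite_ftv_tm [simp]: "finite (ftv_tm e)"
  by (induction e) auto

lemma finite_fv_tm [simp]: "finite (fv_tm e)"
  by (induction e) auto

lemma ftv_open_ty: "ftv_ty (open_ty k U A) \<subseteq> ftv_ty U \<union> ftv_ty A"
  by (induction A arbitrary: k) auto

lemma ftv_rename_ty [simp]: "ftv_ty (rename_ty f A) = f ` ftv_ty A"
  by (induction A) (auto simp: image_Un)

lemma ty_closed_at_rename_ty [simp]: "ty_closed_at k (rename_ty f A) = ty_closed_at k A"
  by (induction A arbitrary: k) auto

lemma mono_rename_ty [simp]: "Defs.mono (rename_ty f A) = Defs.mono A"
  by (induction A) auto

lemma rename_ty_open: "rename_ty f (open_ty k U A) = open_ty k (rename_ty f U) (rename_ty f A)"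
  by (induction A arbitrary: k) auto

lemma rename_ty_id [simp]: "rename_ty (\<lambda>a. a) A = A"
  by (induction A) auto

lemma rename_ty_upd_fresh [simp]: "a \<notin> ftv_ty A \<Longrightarrow> rename_ty (f(a := c)) A = rename_ty f A"
  by (induction A) auto

lemma ftv_rename_tm [simp]: "ftv_tm (rename_tm f g e) = f ` ftv_tm e"
  by (induction e) (auto simp: image_Un)

lemma fv_rename_tm [simp]: "fv_tm (rename_tm f g e) = g ` fv_tm e"
  by (induction e) (auto simp: image_Un)

lemma rename_tm_open: "rename_tm f g (open_tm k u e) = open_tm k (rename_tm f g u) (rename_tm f g e)"
  by (induction e arbitrary: k) auto

lemma rename_tm_id [simp]: "rename_tm (\<lambda>a. a) (\<lambda>x. x) e = e"
  by (induction e) auto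

lemma rename_tm_upd_fresh_tvar [simp]: "a \<notin> ftv_tm e \<Longrightarrow> rename_tm (f(a := c)) g e = rename_tm f g e"
  by (induction e) auto

lemma rename_tm_upd_fresh_var [simp]: "x \<notin> fv_tm e \<Longrightarrow> rename_tm f (g(x := y)) e = rename_tm f g e"
  by (induction e) auto

lemma rename_entry_id [simp]: "rename_entry (\<lambda>a. a) (\<lambda>x. x) b = b"
  by (cases b) auto

lemma wf_ty_rename: "wf_ty G A \<Longrightarrow> f ` tvars G \<subseteq> tvars G' \<Longrightarrow> wf_ty G' (rename_ty f A)"
  by (auto simp: wf_ty_def)

lemma wf_mono_rename: "wf_mono G A \<Longrightarrow> f ` tvars G \<subseteq> tvars G' \<Longrightarrow> wf_mono G' (rename_ty f A)"
  by (auto simp: wf_mono_def wf_ty_def)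

lemma sub_rename:
  "sub G A B \<Longrightarrow> f ` tvars G \<subseteq> tvars G' \<Longrightarrow> sub G' (rename_ty f A) (rename_ty f B)"
proof (induction arbitrary: f G' rule: sub.induct)
  case (sub_var a G)
  then show ?case by (auto intro: sub.sub_var)
next
  case (sub_unit G)
  show ?case by (auto intro: sub.sub_unit)
next
  case (sub_arr G B1 A1 A2 B2)
  then show ?case by (auto intro: sub.sub_arr)
next
  case (sub_allL G t A B)
  then show ?case
    by (auto intro!: sub.sub_allL[where t = "rename_ty f t"] wf_mono_rename
             simp: rename_ty_open[symmetric])
next
  case (sub_allR b G A B)
  obtain c where c: "c \<notin> tvars G' \<union> f ` (ftv_ty A \<union> ftv_ty B)"
    using ex_new_if_finite[OF infinite_UNIV_nat] by (meson finite_Un finite_imageI finite_tvars finite_ftv_ty)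
  have "sub (G' @ [CTVar c]) (rename_ty (f(b := c)) A) (rename_ty (f(b := c)) (open_ty 0 (TFree b) B))"
    using sub_allR by (intro sub_allR.IH) auto
  then have "sub (G' @ [CTVar c]) (rename_ty f A) (open_ty 0 (TFree c) (rename_ty f B))"
    using sub_allR.hyps by (simp add: rename_ty_open)
  then show ?case
    using c by (auto intro!: sub.sub_allR[where b = c])
qed

lemma sub_weaken: "sub G A B \<Longrightarrow> tvars G \<subseteq> tvars G' \<Longrightarrow> sub G' A B"
  using sub_rename[where f = "\<lambda>a. a"] by simp

lemma ftv_open_tm_Free [simp]: "ftv_tm (open_tm k (Free y) e) = ftv_tm e"
  by (induction e arbitrary: k) auto

lemma fv_open_tm_Free: "fv_tm e \<subseteq> fv_tm (open_tm k (Free y) e)"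
  by (induction e arbitrary: k) auto

lemma tm_closed_at_open_Free: "tm_closed_at k (open_tm k (Free y) e) \<Longrightarrow> tm_closed_at (Suc k) e"
  by (induction e arbitrary: k) (auto split: if_splits)

lemma typing_tm_scoped:
  shows "chk G e A \<Longrightarrow> fv_tm e \<subseteq> vars G \<and> ftv_tm e \<subseteq> tvars G \<and> tm_closed_at 0 e"
    and "syn G e A \<Longrightarrow> fv_tm e \<subseteq> vars G \<and> ftv_tm e \<subseteq> tvars G \<and> tm_closed_at 0 e"
    and "app G e A C \<Longrightarrow> fv_tm e \<subseteq> vars G \<and> ftv_tm e \<subseteq> tvars G \<and> tm_closed_at 0 e"
proof (induction rule: chk_syn_app.inducts)
  case (chk_lam x G e A B)
  then show ?case using fv_open_tm_Free[of e 0 x] by (auto dest: tm_closed_at_open_Free)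
next
  case (syn_lam G s t x e)
  then show ?case using fv_open_tm_Free[of e 0 x] by (auto dest: tm_closed_at_open_Free)
qed (auto simp: wf_ty_def mem_vars_iff)

lemma synthesized_ty_scoped:
  shows "syn G e A \<Longrightarrow> ctx_scoped G \<Longrightarrow> ftv_ty A \<subseteq> tvars G"
    and "app G e A C \<Longrightarrow> ctx_scoped G \<Longrightarrow> ftv_ty A \<subseteq> tvars G \<Longrightarrow> ftv_ty C \<subseteq> tvars G"
proof (induction rule: chk_syn_app.inducts(2,3)[where ?P1.0 = "\<lambda>_ _ _. True"])
  case (app_all G t e A C)
  then show ?case using ftv_open_ty[of 0 t A] by (auto simp: wf_mono_def wf_ty_def)
qed (auto simp: ctx_scoped_def wf_ty_def wf_mono_def)

lemma tvars_rename_subset: "rename_entry f g ` set G \<subseteq> set G' \<Longrightarrow> f ` tvars G \<subseteq> tvars G'"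
  by (force simp: mem_tvars_iff)

lemma rename_entry_upd_fresh_tvar:
  assumes "b \<in> set G" and "a \<notin> tvars G" and "ctx_scoped G"
  shows "rename_entry (f(a := c)) g b = rename_entry f g b"
proof (cases b)
  case (CVar x A)
  then have "a \<notin> ftv_ty A"
    using assms by (auto simp: ctx_scoped_def)
  then show ?thesis using CVar by simp
qed (use assms in \<open>auto simp: mem_tvars_iff\<close>)

lemma rename_entry_upd_fresh_var:
  "b \<in> set G \<Longrightarrow> x \<notin> vars G \<Longrightarrow> rename_entry f (g(x := y)) b = rename_entry f g b"
  by (cases b) (auto simp: mem_vars_iff)

lemma typing_rename:
  shows "chk G e A \<Longrightarrow> ctx_scoped G \<Longrightarrow> ftv_ty A \<subseteq> tvars G \<Longrightarrow>
           rename_entry f g ` set G \<subseteq> set G' \<Longrightarrow> chk G' (rename_tm f g e) (rename_ty f A)"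
    and "syn G e A \<Longrightarrow> ctx_scoped G \<Longrightarrow>
           rename_entry f g ` set G \<subseteq> set G' \<Longrightarrow> syn G' (rename_tm f g e) (rename_ty f A)"
    and "app G e A C \<Longrightarrow> ctx_scoped G \<Longrightarrow> ftv_ty A \<subseteq> tvars G \<Longrightarrow>
           rename_entry f g ` set G \<subseteq> set G' \<Longrightarrow> app G' (rename_tm f g e) (rename_ty f A) (rename_ty f C)"
proof (induction arbitrary: f g G' and f g G' and f g G' rule: chk_syn_app.inducts)
  case (syn_var x A G)
  then have "CVar (g x) (rename_ty f A) \<in> set G'" by force
  then show ?case by (simp add: chk_syn_app.syn_var)
next
  case (chk_sub G e A B)
  have "syn G' (rename_tm f g e) (rename_ty f A)"
    using chk_sub.prems(1,3) by (rule chk_sub.IH)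
  moreover have "sub G' (rename_ty f A) (rename_ty f B)"
    using chk_sub.hyps(2) tvars_rename_subset[OF chk_sub.prems(3)] by (rule sub_rename)
  ultimately show ?case by (rule chk_syn_app.chk_sub)
next
  case (syn_anno G A e)
  have "ftv_ty A \<subseteq> tvars G"
    using syn_anno.hyps(1) by (simp add: wf_ty_def)
  with syn_anno.prems have "chk G' (rename_tm f g e) (rename_ty f A)"
    by (intro syn_anno.IH)
  moreover have "wf_ty G' (rename_ty f A)"
    using syn_anno.hyps(1) tvars_rename_subset[OF syn_anno.prems(2)] by (rule wf_ty_rename)
  ultimately show ?case by (simp add: chk_syn_app.syn_anno)
next
  case (chk_unit G)
  show ?case by (simp add: chk_syn_app.chk_unit)
next
  case (syn_unit G)
  show ?case by (simp add: chk_syn_app.syn_unit)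
next
  case (chk_all a G A e)
  obtain c where c: "c \<notin> tvars G' \<union> f ` (ftv_ty A \<union> ftv_tm e)"
    using ex_new_if_finite[OF infinite_UNIV_nat]
    by (meson finite_Un finite_imageI finite_tvars finite_ftv_ty finite_ftv_tm)
  have "rename_entry (f(a := c)) g b = rename_entry f g b" if "b \<in> set G" for b
    using that chk_all.hyps(1) chk_all.prems(1) by (rule rename_entry_upd_fresh_tvar)
  then have "rename_entry (f(a := c)) g ` set G = rename_entry f g ` set G"
    by (rule image_cong[OF refl])
  then have "rename_entry (f(a := c)) g ` set (G @ [CTVar a]) \<subseteq> set (G' @ [CTVar c])"
    using chk_all.prems(3) by auto
  moreover have "ctx_scoped (G @ [CTVar a])"
    using chk_all.prems(1) by (auto simp: ctx_scoped_def)
  moreover have "ftv_ty (open_ty 0 (TFree a) A) \<subseteq> tvars (G @ [CTVar a])"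
    using chk_all.prems(2) ftv_open_ty[of 0 "TFree a" A] by auto
  ultimately have "chk (G' @ [CTVar c]) (rename_tm (f(a := c)) g e)
                     (rename_ty (f(a := c)) (open_ty 0 (TFree a) A))"
    by (intro chk_all.IH)
  then have "chk (G' @ [CTVar c]) (rename_tm f g e) (open_ty 0 (TFree c) (rename_ty f A))"
    using chk_all.hyps by (simp add: rename_ty_open)
  then show ?case
    using c by (auto intro!: chk_syn_app.chk_all[where a = c])
next
  case (app_all G t e A C)
  have "ftv_ty (open_ty 0 t A) \<subseteq> tvars G"
    using app_all.hyps(1) app_all.prems(2) ftv_open_ty[of 0 t A] by (auto simp: wf_mono_def wf_ty_def)
  with app_all.prems have "app G' (rename_tm f g e) (rename_ty f (open_ty 0 t A)) (rename_ty f C)"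
    by (intro app_all.IH)
  moreover have "wf_mono G' (rename_ty f t)"
    using app_all.hyps(1) tvars_rename_subset[OF app_all.prems(3)] by (rule wf_mono_rename)
  ultimately show ?case
    by (simp add: chk_syn_app.app_all rename_ty_open)
next
  case (chk_lam x G e A B)
  obtain y where y: "y \<notin> vars G' \<union> g ` fv_tm e"
    using ex_new_if_finite[OF infinite_UNIV_nat] by (meson finite_Un finite_imageI finite_vars finite_fv_tm)
  have "rename_entry f (g(x := y)) b = rename_entry f g b" if "b \<in> set G" for b
    using that chk_lam.hyps(1) by (rule rename_entry_upd_fresh_var)
  then have "rename_entry f (g(x := y)) ` set G = rename_entry f g ` set G"
    by (rule image_cong[OF refl])
  then have "rename_entry f (g(x := y)) ` set (G @ [CVar x A]) \<subseteq> set (G' @ [CVar y (rename_ty f A)])"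
    using chk_lam.prems(3) by auto
  moreover have "ctx_scoped (G @ [CVar x A])" and "ftv_ty B \<subseteq> tvars (G @ [CVar x A])"
    using chk_lam.prems(1,2) by (auto simp: ctx_scoped_def)
  ultimately have "chk (G' @ [CVar y (rename_ty f A)]) (rename_tm f (g(x := y)) (open_tm 0 (Free x) e))
                     (rename_ty f B)"
    by (intro chk_lam.IH)
  then have "chk (G' @ [CVar y (rename_ty f A)]) (open_tm 0 (Free y) (rename_tm f g e)) (rename_ty f B)"
    using chk_lam.hyps by (simp add: rename_tm_open)
  then show ?case
    using y by (auto intro!: chk_syn_app.chk_lam[where x = y])
next
  case (syn_lam G s t x e)
  obtain y where y: "y \<notin> vars G' \<union> g ` fv_tm e"
    using ex_new_if_finite[OF infinite_UNIV_nat] by (meson finite_Un finite_imageI finite_vars finite_fv_tm)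
  have "rename_entry f (g(x := y)) b = rename_entry f g b" if "b \<in> set G" for b
    using that syn_lam.hyps(2) by (rule rename_entry_upd_fresh_var)
  then have "rename_entry f (g(x := y)) ` set G = rename_entry f g ` set G"
    by (rule image_cong[OF refl])
  then have "rename_entry f (g(x := y)) ` set (G @ [CVar x s]) \<subseteq> set (G' @ [CVar y (rename_ty f s)])"
    using syn_lam.prems(2) by auto
  moreover have "ctx_scoped (G @ [CVar x s])" and "ftv_ty t \<subseteq> tvars (G @ [CVar x s])"
    using syn_lam.prems(1) syn_lam.hyps(1) by (auto simp: ctx_scoped_def wf_mono_def wf_ty_def)
  ultimately have "chk (G' @ [CVar y (rename_ty f s)]) (rename_tm f (g(x := y)) (open_tm 0 (Free x) e))
                     (rename_ty f t)"
    by (intro syn_lam.IH)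
  then have "chk (G' @ [CVar y (rename_ty f s)]) (open_tm 0 (Free y) (rename_tm f g e)) (rename_ty f t)"
    using syn_lam.hyps by (simp add: rename_tm_open)
  moreover have "wf_mono G' (rename_ty f (TArr s t))"
    using syn_lam.hyps(1) tvars_rename_subset[OF syn_lam.prems(2)] by (rule wf_mono_rename)
  ultimately show ?case
    using y by (auto intro!: chk_syn_app.syn_lam[where x = y])
next
  case (syn_app G e1 A e2 C)
  have "syn G' (rename_tm f g e1) (rename_ty f A)"
    using syn_app.prems by (rule syn_app.IH(1))
  moreover have "ftv_ty A \<subseteq> tvars G"
    using syn_app.hyps(1) syn_app.prems(1) by (rule synthesized_ty_scoped(1))
  with syn_app.prems have "app G' (rename_tm f g e2) (rename_ty f A) (rename_ty f C)"
    by (intro syn_app.IH(2))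
  ultimately show ?case by (simp add: chk_syn_app.syn_app)
next
  case (app_arr G e A C)
  with app_arr.prems have "chk G' (rename_tm f g e) (rename_ty f A)"
    by (intro app_arr.IH) auto
  then show ?case by (simp add: chk_syn_app.app_arr)
qed

lemma syn_weaken: "syn G e A \<Longrightarrow> ctx_scoped G \<Longrightarrow> set G \<subseteq> set G' \<Longrightarrow> syn G' e A"
  using typing_rename(2)[where f = "\<lambda>a. a" and g = "\<lambda>x. x"] by simp

lemma ctx_scoped_if_wf_ctx: "wf_ctx G \<Longrightarrow> ctx_scoped G"
  by (induction rule: wf_ctx.induct) (auto simp: ctx_scoped_def wf_ty_def)

lemma fv_subst_tm: "fv_tm (subst_tm x u e) \<subseteq> fv_tm e \<union> fv_tm u"
  by (induction e) auto

lemma ftv_subst_tm: "ftv_tm (subst_tm x u e) \<subseteq> ftv_tm e \<union> ftv_tm u"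
  by (induction e) auto

lemma open_tm_closed: "tm_closed_at k e \<Longrightarrow> k \<le> j \<Longrightarrow> open_tm j u e = e"
  by (induction e arbitrary: k j) auto

lemma subst_tm_open_Free:
  "tm_closed_at 0 u \<Longrightarrow> y \<noteq> x \<Longrightarrow>
     subst_tm x u (open_tm k (Free y) e) = open_tm k (Free y) (subst_tm x u e)"
  by (induction e arbitrary: k) (auto simp: open_tm_closed)

lemma typing_subst:
  assumes e: "syn G e A" and G: "ctx_scoped G" "x \<notin> vars G"
  shows "chk \<Gamma> e' C \<Longrightarrow> \<Gamma> = G @ [CVar x A] @ D \<Longrightarrow> x \<notin> vars D \<Longrightarrow> chk (G @ D) (subst_tm x e e') C"
    and "syn \<Gamma> e' C \<Longrightarrow> \<Gamma> = G @ [CVar x A] @ D \<Longrightarrow> x \<notin> vars D \<Longrightarrow> syn (G @ D) (subst_tm x e e') C"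
    and "app \<Gamma> e' B C \<Longrightarrow> \<Gamma> = G @ [CVar x A] @ D \<Longrightarrow> x \<notin> vars D \<Longrightarrow>
           app (G @ D) (subst_tm x e e') B C"
proof (induction arbitrary: D and D and D rule: chk_syn_app.inducts)
  case (syn_var y T \<Gamma>)
  show ?case
  proof (cases "y = x")
    case True
    then have "T = A" using syn_var G(2) by (auto simp: mem_vars_iff)
    moreover have "syn (G @ D) e A"
      using e G(1) by (rule syn_weaken) simp
    ultimately show ?thesis using True by simp
  next
    case False
    then show ?thesis using syn_var by (auto intro: chk_syn_app.syn_var)
  qed
next
  case (chk_sub \<Gamma> e1 T C)
  then have "sub (G @ D) T C" by (auto intro: sub_weaken)
  then show ?case using chk_sub by (auto intro: chk_syn_app.chk_sub)
next
  case (syn_anno \<Gamma> T e1)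
  then show ?case by (auto intro!: chk_syn_app.syn_anno simp: wf_ty_def)
next
  case (chk_unit \<Gamma>)
  show ?case by (simp add: chk_syn_app.chk_unit)
next
  case (syn_unit \<Gamma>)
  show ?case by (simp add: chk_syn_app.syn_unit)
next
  case (chk_all a \<Gamma> T e1)
  have "chk (G @ D @ [CTVar a]) (subst_tm x e e1) (open_ty 0 (TFree a) T)"
    using chk_all.IH[of "D @ [CTVar a]"] chk_all.prems by simp
  moreover have "a \<notin> ftv_tm (subst_tm x e e1)"
    using ftv_subst_tm[of x e e1] typing_tm_scoped(2)[OF e] chk_all by auto
  ultimately show ?case using chk_all by (auto intro!: chk_syn_app.chk_all[where a = a])
next
  case (app_all \<Gamma> t e1 T C)
  then show ?case by (auto intro!: chk_syn_app.app_all[where t = t] simp: wf_mono_def wf_ty_def)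
next
  case (chk_lam y \<Gamma> e1 T B)
  have "y \<noteq> x" using chk_lam by auto
  then have "chk (G @ D @ [CVar y T]) (subst_tm x e (open_tm 0 (Free y) e1)) B"
    using chk_lam.IH[of "D @ [CVar y T]"] chk_lam.prems by simp
  then have "chk ((G @ D) @ [CVar y T]) (open_tm 0 (Free y) (subst_tm x e e1)) B"
    using subst_tm_open_Free[of e y x 0 e1] typing_tm_scoped(2)[OF e] \<open>y \<noteq> x\<close> by simp
  moreover have "y \<notin> fv_tm (subst_tm x e e1)"
    using fv_subst_tm[of x e e1] typing_tm_scoped(2)[OF e] chk_lam by auto
  ultimately show ?case using chk_lam by (auto intro!: chk_syn_app.chk_lam[where x = y])
next
  case (syn_lam \<Gamma> s t y e1)
  have "y \<noteq> x" using syn_lam by auto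
  then have "chk (G @ D @ [CVar y s]) (subst_tm x e (open_tm 0 (Free y) e1)) t"
    using syn_lam.IH[of "D @ [CVar y s]"] syn_lam.prems by simp
  then have "chk ((G @ D) @ [CVar y s]) (open_tm 0 (Free y) (subst_tm x e e1)) t"
    using subst_tm_open_Free[of e y x 0 e1] typing_tm_scoped(2)[OF e] \<open>y \<noteq> x\<close> by simp
  moreover have "y \<notin> fv_tm (subst_tm x e e1)"
    using fv_subst_tm[of x e e1] typing_tm_scoped(2)[OF e] syn_lam by auto
  moreover have "wf_mono (G @ D) (TArr s t)"
    using syn_lam by (auto simp: wf_mono_def wf_ty_def)
  ultimately show ?case using syn_lam by (auto intro!: chk_syn_app.syn_lam[where x = y])
next
  case (syn_app \<Gamma> e1 T e2 C)
  then show ?case by (auto intro: chk_syn_app.syn_app)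
next
  case (app_arr \<Gamma> e1 T C)
  then show ?case by (auto intro: chk_syn_app.app_arr)
qed

theorem mainTheorem3:
  assumes "wf_ctx G"
    and "x \<notin> vars G"
    and "syn G e A"
  shows "(chk (G @ [CVar x A]) e' C \<longrightarrow> chk G (subst_tm x e e') C)
       \<and> (syn (G @ [CVar x A]) e' C \<longrightarrow> syn G (subst_tm x e e') C)
       \<and> (app (G @ [CVar x A]) e' B C \<longrightarrow> app G (subst_tm x e e') B C)"
  using typing_subst[OF assms(3) ctx_scoped_if_wf_ctx[OF assms(1)] assms(2), where D = "[]"] by simp

end
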